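(* Let $a_{1}<a_{2}<a_{3}<\cdots$ be a strictly increasing infinite sequence of positive integers, let $A=\{a_{1},a_{2},a_{3},\ldots\}$, and let $n>0$ be an integer such that: (1) whenever $m>n$, there exist indices $i<r\leq s<j$ with $a_{m}=a_{i}+a_{j}=a_{r}+a_{s}$; and (2) whenever $a=a_{i}+a_{j}=a_{r}+a_{s}>a_{n}$ for some indices $i<r<s<j$, then $a=a_{m}$ for some $m>n$. Then $A$ is eventually linear, i.e., there exist integers $N$ and $k\geq 1$ such that for all integers $x>N$, $x\in A$ if and only if $k\mid x$. *)

theory Defs
  imports Main
begin

end

theory Submission
  imports Defs
begin

text \<open>Hypothesis (2) says that large two-way sums lie in \<open>A\<close>.

  Two-way sums are unbounded: otherwise, by (1), every large \<open>x \<in> A\<close> is \<open>p + q = 2 h\<close> with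
  \<open>p < h < q\<close> in \<open>A\<close>, and applying this to \<open>q\<close> as well shows that \<open>h\<close> has a neighbour \<open>h - \<delta> \<in> A\<close>
  with \<open>\<delta>\<close> bounded, which for fixed \<open>\<delta>\<close> happens only finitely often. Double counting of
  representations then produces \<open>b \<in> A\<close> with four partners \<open>e\<close> (meaning \<open>e, e + b \<in> A\<close>), and
  these generate an infinite arithmetic progression in \<open>A\<close>. Finally, if \<open>A\<close> contains a
  progression of difference \<open>v\<close>, the residues mod \<open>v\<close> whose class eventually lies in \<open>A\<close> are
  closed under addition, hence are the multiples of some \<open>k\<close>, and every other residue class
  meets \<open>A\<close> at most once.\<close>

definition two_way_sum :: "int set \<Rightarrow> int \<Rightarrow> bool" where
  "two_way_sum A x \<longleftrightarrow> (\<exists>u1 u2 u3 u4. u1 \<in> A \<and> u2 \<in> A \<and> u3 \<in> A \<and> u4 \<in> A \<and>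
     u1 < u2 \<and> u2 < u3 \<and> u3 < u4 \<and> x = u1 + u4 \<and> x = u2 + u3)"

lemma two_way_sumI:
  fixes a b c d :: int
  assumes "{a, b, c, d} \<subseteq> A" "a + b = c + d" "distinct [a, b, c, d]"
  shows "two_way_sum A (a + b)"
proof -
  have ordered: "two_way_sum A (p + q)" if "{p, q, r, s} \<subseteq> A" "p + q = r + s" "p < r" "r < s" for p q r s
    unfolding two_way_sum_def using that by (intro exI[of _ p] exI[of _ r] exI[of _ s] exI[of _ q]) auto
  have sums: "min a b + max a b = a + b" "min c d + max c d = a + b" using assms(2) by linarith+
  have mem: "{min a b, max a b, min c d, max c d} \<subseteq> A" using assms(1) by (simp add: min_def max_def)
  have "min a b < max a b" "min c d < max c d" "min a b \<noteq> min c d"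
    using assms(3) by (auto simp: min_def max_def)
  then consider "min a b < min c d" "min c d < max c d" | "min c d < min a b" "min a b < max a b"
    by linarith
  then show ?thesis
    by cases (use ordered[of "min a b" "max a b" "min c d" "max c d"]
        ordered[of "min c d" "max c d" "min a b" "max a b"] sums mem in \<open>auto simp: insert_commute\<close>)
qed

definition contains_progression :: "int set \<Rightarrow> bool" where
  "contains_progression A \<longleftrightarrow> (\<exists>y v. 0 < v \<and> (\<forall>j::nat. y + int j * v \<in> A))"

lemma four_shifts_cases:
  fixes b :: int
  assumes "0 < b" "e1 < e2" "e2 < e3" "e3 < e4"
  obtains s1 s2 s3 where "{s1, s2, s3} \<subseteq> {e1, e2, e3, e4}" "s1 < s2" "s2 < s3"
      "s2 \<noteq> s1 + b" "s3 \<noteq> s2 + b" "s3 \<noteq> s1 + b"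
    | c d where "{c, c + b, d, d + b} \<subseteq> {e1, e2, e3, e4}" "c < d" "d \<noteq> c + b"
proof -
  \<comment> \<open>Unless three of the points avoid the difference \<open>b\<close>, they form two chains
    \<open>c, c + b\<close> or a single chain \<open>c, c + b, c + 2b, c + 3b\<close>.\<close>
  consider "e2 \<noteq> e1 + b" "e3 \<noteq> e2 + b" "e3 \<noteq> e1 + b"
    | "e2 \<noteq> e1 + b" "e4 \<noteq> e2 + b" "e4 \<noteq> e1 + b"
    | "e3 \<noteq> e1 + b" "e4 \<noteq> e3 + b" "e4 \<noteq> e1 + b"
    | "e3 \<noteq> e2 + b" "e4 \<noteq> e3 + b" "e4 \<noteq> e2 + b"
    | "e2 = e1 + b" "e4 = e3 + b"
    | "e3 = e1 + b" "e4 = e2 + b"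
    | "e2 = e1 + b" "e3 = e2 + b" "e4 = e3 + b"
    using assms by linarith
  then show ?thesis
  proof cases
    case 1 then show ?thesis using that(1)[of e1 e2 e3] assms by simp
  next
    case 2 then show ?thesis using that(1)[of e1 e2 e4] assms by simp
  next
    case 3 then show ?thesis using that(1)[of e1 e3 e4] assms by simp
  next
    case 4 then show ?thesis using that(1)[of e2 e3 e4] assms by simp
  next
    case 5 then show ?thesis using that(2)[of e1 e3] assms by simp
  next
    case 6 then show ?thesis using that(2)[of e1 e2] assms by simp
  next
    case 7 then show ?thesis using that(2)[of e1 e3] assms by simp
  qed
qed

lemma card_eq_4_sorted:
  fixes F :: "'a::linorder set"
  assumes "card F = 4"
  obtains e1 e2 e3 e4 where "F = {e1, e2, e3, e4}" "e1 < e2" "e2 < e3" "e3 < e4"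
proof -
  have "finite F" using assms by (simp add: card_ge_0_finite)
  define xs where "xs = sorted_list_of_set F"
  have xs: "set xs = F" "sorted_wrt (<) xs" "length xs = 4"
    using \<open>finite F\<close> assms by (simp_all add: xs_def)
  then obtain e1 e2 e3 e4 where "xs = [e1, e2, e3, e4]"
    by (auto simp: length_Suc_conv numeral_eq_Suc)
  then show ?thesis using that xs by auto
qed

lemma int_subgroup_eq_multiples:
  fixes S :: "int set"
  assumes diff: "\<And>x y. x \<in> S \<Longrightarrow> y \<in> S \<Longrightarrow> x - y \<in> S" and "v \<in> S" "0 < v"
  obtains k where "0 < k" "\<And>x. x \<in> S \<longleftrightarrow> k dvd x"
proof -
  have zero: "0 \<in> S" using diff[OF \<open>v \<in> S\<close> \<open>v \<in> S\<close>] by simp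
  have neg: "- x \<in> S" if "x \<in> S" for x using diff[OF zero that] by simp
  have add: "x + y \<in> S" if "x \<in> S" "y \<in> S" for x y using diff[OF that(1) neg[OF that(2)]] by simp
  have nat_mult: "int n * x \<in> S" if "x \<in> S" for n x
    by (induction n) (simp_all add: zero add that distrib_right)
  have mult: "m * x \<in> S" if "x \<in> S" for m x
    using nat_mult[OF that, of "nat \<bar>m\<bar>"] neg[OF nat_mult[OF that, of "nat \<bar>m\<bar>"]]
    by (cases "0 \<le> m") simp_all
  define k where "k = int (LEAST n. 0 < n \<and> int n \<in> S)"
  have k: "0 < k" "k \<in> S"
    using LeastI[of "\<lambda>n. 0 < n \<and> int n \<in> S" "nat v"] \<open>v \<in> S\<close> \<open>0 < v\<close> by (simp_all add: k_def)
  have "x \<in> S \<longleftrightarrow> k dvd x" for x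
  proof
    assume "x \<in> S"
    then have "x mod k \<in> S" using diff[OF _ mult[OF k(2)], of x "x div k"] by (simp add: minus_div_mult_eq_mod)
    moreover have "0 \<le> x mod k" "x mod k < k" using k(1) by simp_all
    ultimately have "x mod k = 0"
      using not_less_Least[of "nat (x mod k)" "\<lambda>n. 0 < n \<and> int n \<in> S"] by (fastforce simp: k_def)
    then show "k dvd x" by (simp add: dvd_eq_mod_eq_0)
  next
    assume "k dvd x"
    then show "x \<in> S" using mult[OF k(2)] by (auto simp: mult.commute)
  qed
  with k(1) show ?thesis by (rule that)
qed

lemma periodic_add_closed_int_set_eq_multiples:
  fixes S :: "int set"
  assumes "0 < v" "c \<in> S"
    and add: "\<And>x y. x \<in> S \<Longrightarrow> y \<in> S \<Longrightarrow> x + y \<in> S"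
    and periodic: "\<And>x y. x \<in> S \<Longrightarrow> x mod v = y mod v \<Longrightarrow> y \<in> S"
  obtains k where "0 < k" "\<And>x. x \<in> S \<longleftrightarrow> k dvd x"
proof (rule int_subgroup_eq_multiples)
  have mult: "int (Suc n) * x \<in> S" if "x \<in> S" for n x
  proof (induction n)
    case (Suc n)
    then show ?case using add[OF that Suc.IH] by (simp add: algebra_simps)
  qed (simp add: that)
  show diff: "x - y \<in> S" if "x \<in> S" "y \<in> S" for x y
  proof -
    \<comment> \<open>\<open>-y\<close> is congruent to the positive multiple \<open>(2v - 1) y\<close>.\<close>
    have "x + int (Suc (nat (2 * v - 2))) * y \<in> S" using add[OF that(1) mult[OF that(2)]] .
    moreover have "(x + int (Suc (nat (2 * v - 2))) * y) mod v = (x - y) mod v"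
      using \<open>0 < v\<close> by (simp add: algebra_simps mod_eq_dvd_iff)
    ultimately show ?thesis by (rule periodic)
  qed
  show "v \<in> S" using periodic[OF diff[OF \<open>c \<in> S\<close> \<open>c \<in> S\<close>]] by simp
qed (use assms in auto)

lemma finite_shifted_pairs:
  fixes A :: "int set"
  assumes pos: "\<And>x. x \<in> A \<Longrightarrow> 0 < x" and bounded: "\<And>x. two_way_sum A x \<Longrightarrow> x \<le> M"
    and "0 < \<delta>"
  shows "finite {h \<in> A. h - \<delta> \<in> A}" (is "finite ?H")
proof (cases "?H = {}")
  case False
  then obtain h0 where h0: "h0 \<in> A" "h0 - \<delta> \<in> A" by blast
  have "h \<le> h0 + \<bar>M\<bar> + \<delta>" if "h \<in> ?H" for h
  proof (cases "h0 + \<delta> < h")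
    case True
    then have "two_way_sum A ((h0 - \<delta>) + h)"
      using two_way_sumI[of "h0 - \<delta>" h h0 "h - \<delta>" A] h0 that \<open>0 < \<delta>\<close> by auto
    then show ?thesis using bounded pos[OF h0(1)] by fastforce
  qed (use pos[OF h0(1)] in auto)
  then have "?H \<subseteq> {0..h0 + \<bar>M\<bar> + \<delta>}" using pos by fastforce
  then show ?thesis by (rule finite_subset) simp
qed (metis finite.emptyI)

section \<open>Sets closed under large two-way sums\<close>

locale two_way_sum_closed =
  fixes A :: "int set" and T :: int
  assumes pos: "x \<in> A \<Longrightarrow> 0 < x"
    and closed: "two_way_sum A x \<Longrightarrow> T < x \<Longrightarrow> x \<in> A"
begin

lemma sum_mem:
  assumes "{a, b, c, d} \<subseteq> A" "a + b = c + d" "distinct [a, b, c, d]" "T < a + b"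
  shows "a + b \<in> A"
  using closed[OF two_way_sumI[OF assms(1-3)] assms(4)] .

lemma progression_of_three_pairs:
  assumes "0 < d" "s1 < s2" "s2 < s3"
    and mem: "{s1, s2, s3, s1 + d, s2 + d, s3 + d} \<subseteq> A" and "T < s1 + d"
    and "s2 \<noteq> s1 + d" "s3 \<noteq> s2 + d" "s3 \<noteq> s1 + d"
  shows "contains_progression A"
proof -
  \<comment> \<open>Adding \<open>v\<close> maps a pair \<open>y, y + d\<close> in \<open>A\<close> to another one, via the two-way sums
    \<open>s\<^sub>3 + (y + d) = (s\<^sub>3 + d) + y\<close>, \<open>y + v = s\<^sub>1 + (s\<^sub>3 + y + d)\<close> and
    \<open>(y + d) + v = (s\<^sub>1 + d) + (s\<^sub>3 + y + d)\<close>.\<close>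
  define v where "v = s1 + s3 + d"
  have "0 < s1" using pos mem by auto
  have "v \<in> A"
    using sum_mem[of s3 "s1 + d" "s3 + d" s1] assms \<open>0 < s1\<close> by (auto simp: v_def algebra_simps)
  have step: "y + v \<in> A \<and> y + v + d \<in> A"
    if "y \<in> A" "y + d \<in> A" "y = s2 \<or> s2 + v \<le> y" for y
  proof -
    have "s3 + (y + d) \<in> A"
      using sum_mem[of s3 "y + d" "s3 + d" y] that assms \<open>0 < s1\<close> by (auto simp: v_def algebra_simps)
    then have "s1 + (s3 + (y + d)) \<in> A" "(s1 + d) + (s3 + (y + d)) \<in> A"
      using sum_mem[of s1 "s3 + (y + d)" y v] sum_mem[of "s1 + d" "s3 + (y + d)" "y + d" v]
        \<open>v \<in> A\<close> that assms \<open>0 < s1\<close> by (auto simp: v_def algebra_simps)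
    then show ?thesis by (simp add: v_def algebra_simps)
  qed
  have "s2 + int j * v \<in> A \<and> s2 + int j * v + d \<in> A" for j :: nat
  proof (induction j)
    case (Suc j)
    have "s2 + int j * v = s2 \<or> s2 + v \<le> s2 + int j * v"
      using \<open>0 < s1\<close> assms by (cases j) (auto simp: v_def)
    with Suc.IH show ?case using step[of "s2 + int j * v"] by (simp add: algebra_simps)
  qed (use mem in simp)
  moreover have "0 < v" using \<open>0 < s1\<close> assms by (simp add: v_def)
  ultimately show ?thesis unfolding contains_progression_def by blast
qed

lemma progression_of_two_triples:
  assumes "0 < b" "x < y" "y \<noteq> x + b" "T < x"
    and mem: "{x - b, x, x + b, y - b, y, y + b} \<subseteq> A"
  shows "contains_progression A"
proof -
  have "0 < x - b" "0 < y - b" using pos[of "x - b"] pos[of "y - b"] mem by auto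
  \<comment> \<open>Adding \<open>x\<close> maps a triple \<open>z - b, z, z + b\<close> in \<open>A\<close> to another one, via the two-way sums
    \<open>(x - b) + z = x + (z - b)\<close>, \<open>(x - b) + (z + b) = x + z\<close> and \<open>(x + b) + z = x + (z + b)\<close>.\<close>
  have step: "x + z - b \<in> A \<and> x + z \<in> A \<and> x + z + b \<in> A"
    if "{z - b, z, z + b} \<subseteq> A" "z = y \<or> y + x \<le> z" for z
  proof -
    have "(x - b) + (z + b) \<in> A" "(x - b) + z \<in> A" "(x + b) + z \<in> A"
      using sum_mem[of "x - b" "z + b" x z] sum_mem[of "x - b" z x "z - b"] sum_mem[of "x + b" z x "z + b"]
        that assms \<open>0 < x - b\<close> \<open>0 < y - b\<close> by (auto simp: algebra_simps)
    then show ?thesis by (simp add: algebra_simps)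
  qed
  have "{y + int j * x - b, y + int j * x, y + int j * x + b} \<subseteq> A" for j :: nat
  proof (induction j)
    case (Suc j)
    have "y + int j * x = y \<or> y + x \<le> y + int j * x"
      using \<open>0 < x - b\<close> assms by (cases j) auto
    with Suc.IH show ?case using step[of "y + int j * x"] by (simp add: algebra_simps)
  qed (use mem in simp)
  moreover have "0 < x" using \<open>0 < x - b\<close> assms by simp
  ultimately show ?thesis unfolding contains_progression_def by blast
qed

definition partners :: "int \<Rightarrow> int set" where
  "partners b = {a \<in> A. a + b \<in> A \<and> T < a + b}"

lemma progression_of_four_partners:
  assumes "0 < b" "e1 < e2" "e2 < e3" "e3 < e4" and e: "{e1, e2, e3, e4} \<subseteq> partners b"
  shows "contains_progression A"
  using four_shifts_cases[OF assms(1-4)]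
proof cases
  case (1 s1 s2 s3)
  then have "{s1, s2, s3} \<subseteq> partners b" using e by blast
  then have "{s1, s2, s3, s1 + b, s2 + b, s3 + b} \<subseteq> A" "T < s1 + b" by (auto simp: partners_def)
  with 1 \<open>0 < b\<close> show ?thesis by (intro progression_of_three_pairs[of b s1 s2 s3])
next
  case (2 c d)
  then have "{c, c + b, d, d + b} \<subseteq> partners b" using e by blast
  then have "{c, c + b, c + b + b, d, d + b, d + b + b} \<subseteq> A" "T < c + b" by (auto simp: partners_def)
  with 2 \<open>0 < b\<close> show ?thesis by (intro progression_of_two_triples[of b "c + b" "d + b"]) auto
qed

subsection \<open>Eventual linearity from a progression\<close>

definition eventually_class :: "int \<Rightarrow> int \<Rightarrow> bool" where
  "eventually_class v c \<longleftrightarrow> (\<forall>\<^sub>F x in at_top. x mod v = c mod v \<longrightarrow> x \<in> A)"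

lemma eventually_class_mod_cong:
  "eventually_class v c \<Longrightarrow> c mod v = c' mod v \<Longrightarrow> eventually_class v c'"
  by (simp add: eventually_class_def)

lemma eventually_classD:
  assumes "eventually_class v c"
  obtains N where "\<And>x. N \<le> x \<Longrightarrow> x mod v = c mod v \<Longrightarrow> x \<in> A"
  using assms that unfolding eventually_class_def eventually_at_top_linorder by blast

lemma eventually_classI:
  assumes "\<And>x. N \<le> x \<Longrightarrow> x mod v = c mod v \<Longrightarrow> x \<in> A"
  shows "eventually_class v c"
  using assms by (auto simp: eventually_class_def eventually_at_top_linorder)

lemma eventually_class_members:
  assumes "0 < v" "eventually_class v c"
  obtains y1 y2 where "y1 \<in> A" "y2 \<in> A" "y1 < y2" "y1 mod v = c mod v" "y2 mod v = c mod v"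
proof -
  obtain N where N: "\<And>x. N \<le> x \<Longrightarrow> x mod v = c mod v \<Longrightarrow> x \<in> A"
    using eventually_classD[OF assms(2)] by blast
  define y where "y = c + (\<bar>N\<bar> + \<bar>c\<bar>) * v"
  have "\<bar>N\<bar> + \<bar>c\<bar> \<le> (\<bar>N\<bar> + \<bar>c\<bar>) * v" using mult_left_mono[of 1 v "\<bar>N\<bar> + \<bar>c\<bar>"] \<open>0 < v\<close> by simp
  then have "N \<le> y" by (simp add: y_def)
  then show ?thesis
    using that[of y "y + v"] N[of y] N[of "y + v"] \<open>0 < v\<close> by (simp add: y_def)
qed

text \<open>For large \<open>x \<equiv> y\<^sub>1 + c (mod v)\<close>, both \<open>x - y\<^sub>1\<close> and \<open>x - y\<^sub>2\<close> are large elements of the class of \<open>c\<close>,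
  so \<open>x = y\<^sub>1 + (x - y\<^sub>1) = y\<^sub>2 + (x - y\<^sub>2)\<close> is a two-way sum.\<close>

lemma eventually_class_add_member:
  assumes "y1 \<in> A" "y2 \<in> A" "y1 < y2" "y1 mod v = y2 mod v" "eventually_class v c"
  shows "eventually_class v (y1 + c)"
proof -
  obtain N where N: "\<And>x. N \<le> x \<Longrightarrow> x mod v = c mod v \<Longrightarrow> x \<in> A"
    using eventually_classD[OF assms(5)] by blast
  have "0 < y1" using pos assms(1) by simp
  show ?thesis
  proof (rule eventually_classI)
    fix x assume x: "\<bar>N\<bar> + \<bar>T\<bar> + 2 * y2 + 1 \<le> x" "x mod v = (y1 + c) mod v"
    have "(x - y1) mod v = (y1 + c - y1) mod v" "(x - y2) mod v = (y1 + c - y1) mod v"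
      using mod_diff_cong[OF x(2) refl] mod_diff_cong[OF x(2) assms(4)[symmetric]] by simp_all
    moreover have "N \<le> x - y2" "T < x" "2 * y2 < x"
      using x(1) \<open>0 < y1\<close> assms(3) abs_ge_self[of T] abs_ge_self[of N] by linarith+
    ultimately have "x - y1 \<in> A" "x - y2 \<in> A" using N assms(3) by simp_all
    then have "y2 + (x - y2) \<in> A"
      using sum_mem[of y2 "x - y2" y1 "x - y1"] assms \<open>N \<le> x - y2\<close> \<open>T < x\<close> \<open>2 * y2 < x\<close> by auto
    then show "x \<in> A" by simp
  qed
qed

lemma eventually_class_add:
  assumes "0 < v" "eventually_class v c" "eventually_class v c'"
  shows "eventually_class v (c + c')"
proof -
  obtain y1 y2 where y: "y1 \<in> A" "y2 \<in> A" "y1 < y2" "y1 mod v = c mod v" "y2 mod v = c mod v"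
    using assms(1,2) by (rule eventually_class_members)
  have "eventually_class v (y1 + c')"
    using y assms(3) by (intro eventually_class_add_member[of y1 y2]) simp_all
  then show ?thesis
    by (rule eventually_class_mod_cong) (rule mod_add_cong[OF y(4) refl])
qed

lemma eventually_class_of_progression:
  assumes "0 < v" "\<And>j::nat. y + int j * v \<in> A"
  shows "eventually_class v y"
proof (rule eventually_classI)
  fix x assume "y \<le> x" "x mod v = y mod v"
  then have "v dvd x - y" by (simp add: mod_eq_dvd_iff)
  then obtain m where m: "x - y = v * m" by (rule dvdE)
  with \<open>y \<le> x\<close> have "0 \<le> v * m" by simp
  with \<open>0 < v\<close> have "0 \<le> m" by (simp add: zero_le_mult_iff)
  with m have "x = y + int (nat m) * v" by (simp add: algebra_simps)
  then show "x \<in> A" using assms(2)[of "nat m"] by simp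
qed

lemma finite_not_eventually_class_add:
  assumes "0 < v" "eventually_class v c"
  shows "finite {z \<in> A. \<not> eventually_class v (z + c)}" (is "finite ?E")
proof -
  have full: "eventually_class v (z + c)"
    if "z \<in> A" "z' \<in> A" "z mod v = z' mod v" "z \<noteq> z'" for z z'
  proof (cases "z < z'")
    case True
    then show ?thesis using eventually_class_add_member that assms(2) by blast
  next
    case False
    then have "eventually_class v (z' + c)"
      using eventually_class_add_member[of z' z] that assms(2) by simp
    then show ?thesis
      by (rule eventually_class_mod_cong) (rule mod_add_cong[OF that(3)[symmetric] refl])
  qed
  have "(\<lambda>z. z mod v) ` ?E \<subseteq> {0..<v}" using \<open>0 < v\<close> by auto
  then have "finite ((\<lambda>z. z mod v) ` ?E)" by (rule finite_subset) simp
  moreover have "inj_on (\<lambda>z. z mod v) ?E" by (rule inj_onI) (use full in blast)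
  ultimately show ?thesis by (rule finite_imageD)
qed

lemma eventually_linear_of_progression:
  assumes "contains_progression A"
  obtains k where "0 < k" "\<forall>\<^sub>F x in at_top. x \<in> A \<longleftrightarrow> k dvd x"
proof -
  obtain y v where v: "0 < v" and y: "\<And>j::nat. y + int j * v \<in> A"
    using assms by (auto simp: contains_progression_def)
  have "eventually_class v y" using v y by (rule eventually_class_of_progression)
  then obtain k where k: "0 < k" and full_iff: "\<And>c. eventually_class v c \<longleftrightarrow> k dvd c"
    using periodic_add_closed_int_set_eq_multiples[OF v, of y "{c. eventually_class v c}"]
      eventually_class_add[OF v] eventually_class_mod_cong by auto
  define E where "E = {z \<in> A. \<not> eventually_class v (z + y)}"
  define R where "R = {r \<in> {0..<v}. eventually_class v r}"
  have "finite E" unfolding E_def using v \<open>eventually_class v y\<close> by (rule finite_not_eventually_class_add)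
  have "finite R" by (rule finite_subset[of _ "{0..<v}"]) (auto simp: R_def)
  then have "\<forall>\<^sub>F x in at_top. \<forall>r\<in>R. x mod v = r mod v \<longrightarrow> x \<in> A"
    by (rule eventually_ball_finite) (auto simp: R_def eventually_class_def)
  moreover have "\<forall>\<^sub>F x in at_top. Max (insert 0 E) < x" by simp
  ultimately have "\<forall>\<^sub>F x in at_top. x \<in> A \<longleftrightarrow> k dvd x"
  proof eventually_elim
    case (elim x)
    show ?case
    proof
      assume "x \<in> A"
      with elim(2) \<open>finite E\<close> have "eventually_class v (x + y)"
        by (auto simp: E_def dest: Max_ge[of "insert 0 E" x])
      with full_iff \<open>eventually_class v y\<close> show "k dvd x" by (metis dvd_add_left_iff)
    next
      assume "k dvd x"
      then have "x mod v \<in> R"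
        using full_iff[of x] full_iff[of "x mod v"] v eventually_class_mod_cong by (auto simp: R_def)
      with elim(1) show "x \<in> A" by (metis mod_mod_trivial)
    qed
  qed
  with k show ?thesis by (rule that)
qed

definition reps :: "int \<Rightarrow> (int \<times> int) set" where
  "reps x = {(w, u). w \<in> A \<and> u \<in> A \<and> w + u = x}"

lemma finite_reps: "finite (reps x)"
proof (rule finite_subset)
  show "reps x \<subseteq> {0..x} \<times> {0..x}" using pos by (fastforce simp: reps_def)
qed simp

lemma card_reps_ge_4:
  assumes "two_way_sum A x"
  shows "4 \<le> card (reps x)"
proof -
  obtain u1 u2 u3 u4 where u: "u1 \<in> A" "u2 \<in> A" "u3 \<in> A" "u4 \<in> A" "u1 < u2" "u2 < u3" "u3 < u4"
    "x = u1 + u4" "x = u2 + u3"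
    using assms by (auto simp: two_way_sum_def)
  then have "{(u1, u4), (u4, u1), (u2, u3), (u3, u2)} \<subseteq> reps x" by (auto simp: reps_def)
  moreover have "card {(u1, u4), (u4, u1), (u2, u3), (u3, u2)} = 4" using u by auto
  ultimately show ?thesis by (metis card_mono finite_reps)
qed

lemma sum_card_reps_le:
  assumes few: "\<And>b. b \<in> A \<Longrightarrow> finite (partners b) \<and> card (partners b) \<le> 3"
  shows "(\<Sum>x \<in> {x \<in> A. T < x \<and> x \<le> X}. card (reps x)) \<le> 3 * card {w \<in> A. w \<le> X}"
proof -
  let ?S = "{x \<in> A. T < x \<and> x \<le> X}" and ?W = "{w \<in> A. w \<le> X}"
  have "finite ?W" by (rule finite_subset[of _ "{0..X}"]) (auto dest: pos)
  then have "finite ?S" by (rule rev_finite_subset) auto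
  have "(\<Sum>x \<in> ?S. card (reps x)) = card (\<Union>x \<in> ?S. reps x)"
    using \<open>finite ?S\<close> finite_reps by (intro card_UN_disjoint[symmetric]) (auto simp: reps_def)
  also have "\<dots> \<le> card (SIGMA w:?W. partners w)"
  proof (rule card_mono)
    show "finite (SIGMA w:?W. partners w)" using \<open>finite ?W\<close> few by auto
    show "(\<Union>x \<in> ?S. reps x) \<subseteq> (SIGMA w:?W. partners w)"
      using pos by (fastforce simp: reps_def partners_def add.commute)
  qed
  also have "\<dots> = (\<Sum>w \<in> ?W. card (partners w))" using \<open>finite ?W\<close> few by simp
  also have "\<dots> \<le> 3 * card ?W" using sum_bounded_above[of ?W "\<lambda>w. card (partners w)" 3] few by simp
  finally show ?thesis .
qed

end

section \<open>Sets whose large elements are sums in two ways\<close>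

locale two_way_represented = two_way_sum_closed +
  assumes represented: "x \<in> A \<Longrightarrow> T < x \<Longrightarrow> \<exists>u1 u2 u3 u4. u1 \<in> A \<and> u2 \<in> A \<and> u3 \<in> A \<and> u4 \<in> A \<and>
      u1 < u2 \<and> u2 \<le> u3 \<and> u3 < u4 \<and> x = u1 + u4 \<and> x = u2 + u3"
    and infinite_A: "infinite A"
begin

lemma card_reps_ge_3:
  assumes "x \<in> A" "T < x"
  shows "3 \<le> card (reps x)"
proof -
  obtain u1 u2 u3 u4 where u: "u1 \<in> A" "u2 \<in> A" "u3 \<in> A" "u4 \<in> A" "u1 < u2" "u2 \<le> u3" "u3 < u4"
    "x = u1 + u4" "x = u2 + u3"
    using represented[OF assms] by blast
  then have "{(u1, u4), (u4, u1), (u2, u3)} \<subseteq> reps x" by (auto simp: reps_def)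
  moreover have "card {(u1, u4), (u4, u1), (u2, u3)} = 3" using u by auto
  ultimately show ?thesis by (metis card_mono finite_reps)
qed

text \<open>Double counting of the pairs \<open>(w, u)\<close> with \<open>w + u \<in> A\<close> in \<open>(T, X]\<close>: each such sum has at
  least three ordered representations and each two-way sum at least four, whereas each \<open>w\<close>
  has at most three partners.\<close>

lemma card_two_way_sums_le:
  assumes few: "\<And>b. b \<in> A \<Longrightarrow> finite (partners b) \<and> card (partners b) \<le> 3" and "T \<le> X"
  shows "card {x \<in> A. T < x \<and> x \<le> X \<and> two_way_sum A x} \<le> 3 * card {x \<in> A. x \<le> T}"
proof -
  let ?S = "{x \<in> A. T < x \<and> x \<le> X}" and ?G = "{x \<in> A. T < x \<and> x \<le> X \<and> two_way_sum A x}"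
    and ?L = "{x \<in> A. x \<le> T}"
  have W: "{w \<in> A. w \<le> X} = ?S \<union> ?L" using \<open>T \<le> X\<close> by auto
  have "finite {w \<in> A. w \<le> X}" by (rule finite_subset[of _ "{0..X}"]) (auto dest: pos)
  then have fin: "finite ?S" "finite ?L" unfolding W by simp_all
  have "card {w \<in> A. w \<le> X} = card ?S + card ?L" unfolding W using fin by (intro card_Un_disjoint) auto
  moreover have "3 * card ?S + card ?G = (\<Sum>x \<in> ?S. 3 + (if two_way_sum A x then 1 else 0))"
  proof -
    have "?G = {x \<in> ?S. two_way_sum A x}" by auto
    then show ?thesis using fin(1) by (simp add: sum.distrib sum.inter_filter[symmetric])
  qed
  moreover have "\<dots> \<le> (\<Sum>x \<in> ?S. card (reps x))"
    using card_reps_ge_3 card_reps_ge_4 by (intro sum_mono) auto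
  ultimately show ?thesis using sum_card_reps_le[OF few, of X] by linarith
qed

lemma finite_two_way_sums_of_few_partners:
  assumes few: "\<And>b. b \<in> A \<Longrightarrow> finite (partners b) \<and> card (partners b) \<le> 3"
  shows "finite {x. two_way_sum A x \<and> T < x}"
proof (rule ccontr)
  let ?G = "{x. two_way_sum A x \<and> T < x}"
  assume "infinite ?G"
  then obtain F where F: "finite F" "card F = Suc (3 * card {x \<in> A. x \<le> T})" "F \<subseteq> ?G"
    using infinite_arbitrarily_large by blast
  then have "Max F \<in> F" by (intro Max_in) auto
  have "F \<subseteq> {x \<in> A. T < x \<and> x \<le> Max F \<and> two_way_sum A x}"
    using F closed by (auto intro: Max_ge)
  moreover have "finite {x \<in> A. T < x \<and> x \<le> Max F \<and> two_way_sum A x}"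
    by (rule finite_subset[of _ "{T..Max F}"]) auto
  ultimately have "card F \<le> card {x \<in> A. T < x \<and> x \<le> Max F \<and> two_way_sum A x}"
    by (rule card_mono[rotated])
  also have "\<dots> \<le> 3 * card {x \<in> A. x \<le> T}"
    using F \<open>Max F \<in> F\<close> by (intro card_two_way_sums_le[OF few]) auto
  finally show False using F by simp
qed

lemma midpoint_of_large_element:
  assumes bounded: "\<And>x. two_way_sum A x \<Longrightarrow> x \<le> M" and "T \<le> M" "x \<in> A" "M < x"
  obtains p h q where "p \<in> A" "h \<in> A" "q \<in> A" "p < h" "h < q" "x = p + q" "x = 2 * h"
proof -
  obtain u1 u2 u3 u4 where u: "u1 \<in> A" "u2 \<in> A" "u3 \<in> A" "u4 \<in> A" "u1 < u2" "u2 \<le> u3" "u3 < u4"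
    "x = u1 + u4" "x = u2 + u3"
    using represented[of x] assms by fastforce
  have "u2 = u3"
  proof (rule ccontr)
    assume "u2 \<noteq> u3"
    with u have "two_way_sum A x"
      unfolding two_way_sum_def by (intro exI[of _ u1] exI[of _ u2] exI[of _ u3] exI[of _ u4]) auto
    with bounded \<open>M < x\<close> show False by fastforce
  qed
  with u show ?thesis using that[of u1 u2 u4] by simp
qed

text \<open>If \<open>x = p + q = 2 h\<close> and also \<open>q = 2 h'\<close>, then \<open>p\<close> cannot be large: otherwise \<open>p = 2 h''\<close>
  and \<open>h'' + q = h' + h\<close> would be a large two-way sum. Hence \<open>h' = h - p / 2\<close> is a
  close neighbour of \<open>h\<close>.\<close>

lemma half_has_close_neighbour:
  assumes bounded: "\<And>x. two_way_sum A x \<Longrightarrow> x \<le> M" and "T \<le> M" "0 \<le> M" "x \<in> A" "2 * M < x"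
  obtains h \<delta> where "x = 2 * h" "h \<in> A" "h - \<delta> \<in> A" "0 < \<delta>" "\<delta> \<le> M"
proof -
  have "M < x" using assms by linarith
  then obtain p h q where phq: "p \<in> A" "h \<in> A" "q \<in> A" "p < h" "h < q" "x = p + q" "x = 2 * h"
    using midpoint_of_large_element[OF bounded \<open>T \<le> M\<close> \<open>x \<in> A\<close>] by metis
  have "M < q" using phq \<open>2 * M < x\<close> by linarith
  then obtain h' where h': "h' \<in> A" "q = 2 * h'"
    using midpoint_of_large_element[OF bounded \<open>T \<le> M\<close> \<open>q \<in> A\<close>] by metis
  have "0 < p" using pos phq(1) by simp
  have "p \<le> M"
  proof (rule ccontr)
    assume "\<not> p \<le> M"
    then have "M < p" by simp
    then obtain h'' where h'': "h'' \<in> A" "p = 2 * h''"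
      using midpoint_of_large_element[OF bounded \<open>T \<le> M\<close> \<open>p \<in> A\<close>] by metis
    then have "two_way_sum A (h'' + q)"
      using two_way_sumI[of h'' q h' h A] phq h' \<open>0 < p\<close> by auto
    with bounded have "h'' + q \<le> M" by simp
    with \<open>\<not> p \<le> M\<close> phq h'' \<open>0 < p\<close> show False by linarith
  qed
  show ?thesis using that[of h "h - h'"] phq h' \<open>0 < p\<close> \<open>p \<le> M\<close> by simp
qed

lemma two_way_sums_unbounded: "\<exists>x. two_way_sum A x \<and> M < x"
proof (rule ccontr)
  define M' where "M' = max M (max T 0)"
  assume "\<nexists>x. two_way_sum A x \<and> M < x"
  then have bounded: "two_way_sum A x \<Longrightarrow> x \<le> M'" for x by (force simp: M'_def)
  have "T \<le> M'" "0 \<le> M'" by (simp_all add: M'_def)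
  have "{x \<in> A. 2 * M' < x} \<subseteq> (\<lambda>h. 2 * h) ` (\<Union>\<delta> \<in> {1..M'}. {h \<in> A. h - \<delta> \<in> A})"
  proof
    fix x assume "x \<in> {x \<in> A. 2 * M' < x}"
    then obtain h \<delta> where "x = 2 * h" "h \<in> A" "h - \<delta> \<in> A" "0 < \<delta>" "\<delta> \<le> M'"
      using half_has_close_neighbour[OF bounded \<open>T \<le> M'\<close> \<open>0 \<le> M'\<close>] by blast
    then show "x \<in> (\<lambda>h. 2 * h) ` (\<Union>\<delta> \<in> {1..M'}. {h \<in> A. h - \<delta> \<in> A})" by force
  qed
  moreover have "finite (\<Union>\<delta> \<in> {1..M'}. {h \<in> A. h - \<delta> \<in> A})"
    using finite_shifted_pairs[OF pos bounded] by simp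
  ultimately have "finite {x \<in> A. 2 * M' < x}" by (meson finite_imageI finite_subset)
  moreover have "finite {x \<in> A. x \<le> 2 * M'}" by (rule finite_subset[of _ "{0..2 * M'}"]) (auto dest: pos)
  moreover have "A = {x \<in> A. 2 * M' < x} \<union> {x \<in> A. x \<le> 2 * M'}" by auto
  ultimately show False using infinite_A by (metis finite_Un)
qed

lemma contains_progression: "contains_progression A"
proof -
  have "infinite {x. two_way_sum A x \<and> T < x}" (is "infinite ?G")
  proof
    assume "finite ?G"
    obtain x where x: "two_way_sum A x" "Max (insert T ?G) < x"
      using two_way_sums_unbounded by blast
    moreover from x \<open>finite ?G\<close> have "T < x" using Max_ge[of "insert T ?G" T] by simp
    ultimately have "x \<le> Max (insert T ?G)" using \<open>finite ?G\<close> by (intro Max_ge) auto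
    with x show False by simp
  qed
  then obtain b where "b \<in> A" and many: "\<not> (finite (partners b) \<and> card (partners b) \<le> 3)"
    using finite_two_way_sums_of_few_partners by blast
  obtain F where "F \<subseteq> partners b" "card F = 4"
  proof (cases "finite (partners b)")
    case True
    with many have "4 \<le> card (partners b)" by simp
    then show ?thesis using that by (metis obtain_subset_with_card_n)
  next
    case False
    then show ?thesis using that infinite_arbitrarily_large by metis
  qed
  moreover obtain e1 e2 e3 e4 where "F = {e1, e2, e3, e4}" "e1 < e2" "e2 < e3" "e3 < e4"
    using card_eq_4_sorted[OF \<open>card F = 4\<close>] by blast
  ultimately show ?thesis
    using progression_of_four_partners[of b e1 e2 e3 e4] pos[OF \<open>b \<in> A\<close>] by simp
qed

end

lemma two_way_represented_sequence:
  fixes a :: "nat \<Rightarrow> int" and n :: nat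
  assumes mono: "\<And>i j. 1 \<le> i \<Longrightarrow> i < j \<Longrightarrow> a i < a j"
    and pos: "\<And>i. 1 \<le> i \<Longrightarrow> a i > 0"
    and npos: "n > 0"
    and cond1: "\<And>m. m > n \<Longrightarrow>
      \<exists>i r s j. 1 \<le> i \<and> i < r \<and> r \<le> s \<and> s < j \<and>
                 a m = a i + a j \<and> a m = a r + a s"
    and cond2: "\<And>i r s j. 1 \<le> i \<Longrightarrow> i < r \<Longrightarrow> r < s \<Longrightarrow> s < j \<Longrightarrow>
      a i + a j = a r + a s \<Longrightarrow> a i + a j > a n \<Longrightarrow>
      \<exists>m. m > n \<and> a m = a i + a j"
  shows "two_way_represented (a ` {1..}) (a n)"
proof -
  have strict: "strict_mono_on {1..} a" using mono by (intro strict_mono_onI) auto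
  have less_iff: "a i < a j \<longleftrightarrow> i < j" if "1 \<le> i" "1 \<le> j" for i j
    using strict_mono_on_less[OF strict] that by simp
  show ?thesis
  proof unfold_locales
    show "0 < x" if "x \<in> a ` {1..}" for x using that pos by auto
  next
    fix x assume "two_way_sum (a ` {1..}) x" "a n < x"
    then obtain i r s j where "1 \<le> i" "1 \<le> r" "1 \<le> s" "1 \<le> j" "a i < a r" "a r < a s" "a s < a j"
      "x = a i + a j" "x = a r + a s"
      by (auto simp: two_way_sum_def)
    with less_iff cond2[of i r s j] \<open>a n < x\<close> obtain m where "n < m" "a m = x" by auto
    with npos show "x \<in> a ` {1..}" by force
  next
    fix x assume "x \<in> a ` {1..}" "a n < x"
    then obtain m where "1 \<le> m" "x = a m" "n < m" using less_iff[of n] npos by auto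
    with cond1 obtain i r s j where "1 \<le> i" "i < r" "r \<le> s" "s < j" "x = a i + a j" "x = a r + a s"
      by blast
    moreover have "a r \<le> a s" using \<open>r \<le> s\<close> mono[of r s] \<open>1 \<le> i\<close> \<open>i < r\<close> by fastforce
    ultimately show "\<exists>u1 u2 u3 u4. u1 \<in> a ` {1..} \<and> u2 \<in> a ` {1..} \<and> u3 \<in> a ` {1..} \<and>
        u4 \<in> a ` {1..} \<and> u1 < u2 \<and> u2 \<le> u3 \<and> u3 < u4 \<and> x = u1 + u4 \<and> x = u2 + u3"
      using mono[of i r] mono[of s j] by (intro exI[of _ "a i"] exI[of _ "a r"] exI[of _ "a s"] exI[of _ "a j"]) auto
  next
    show "infinite (a ` {1..})"
      using strict_mono_on_imp_inj_on[OF strict] infinite_Ici[of "1::nat"] finite_imageD by blast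
  qed
qed

theorem mainTheorem1:
  fixes a :: "nat \<Rightarrow> int" and n :: nat
  assumes mono: "\<And>i j. 1 \<le> i \<Longrightarrow> i < j \<Longrightarrow> a i < a j"
    and pos: "\<And>i. 1 \<le> i \<Longrightarrow> a i > 0"
    and npos: "n > 0"
    and cond1: "\<And>m. m > n \<Longrightarrow>
      \<exists>i r s j. 1 \<le> i \<and> i < r \<and> r \<le> s \<and> s < j \<and>
                 a m = a i + a j \<and> a m = a r + a s"
    and cond2: "\<And>i r s j. 1 \<le> i \<Longrightarrow> i < r \<Longrightarrow> r < s \<Longrightarrow> s < j \<Longrightarrow>
      a i + a j = a r + a s \<Longrightarrow> a i + a j > a n \<Longrightarrow>
      \<exists>m. m > n \<and> a m = a i + a j"
  shows "\<exists>(N::int) (k::int). k \<ge> 1 \<and>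
           (\<forall>x. x > N \<longrightarrow> (x \<in> a ` {1..} \<longleftrightarrow> k dvd x))"
proof -
  interpret two_way_represented "a ` {1..}" "a n"
    using two_way_represented_sequence[OF assms] .
  obtain k where "0 < k" "\<forall>\<^sub>F x in at_top. x \<in> a ` {1..} \<longleftrightarrow> k dvd x"
    using eventually_linear_of_progression[OF contains_progression] by blast
  then obtain N where "\<forall>x \<ge> N. x \<in> a ` {1..} \<longleftrightarrow> k dvd x"
    by (auto simp: eventually_at_top_linorder)
  with \<open>0 < k\<close> show ?thesis by (intro exI[of _ N] exI[of _ k]) auto
qed

end
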